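(* Let $p$ be a prime, $\Omega=\mathbb{F}_p[[T]]$ and $\Omega_n=\Omega/(T^n)$ for $n\ge 1$. Let $\mathcal{M}$ be the set of pairs $(N_1,N_2)$ of maximal submodules of $\Omega^2$, equipped with the inverse-limit probability space $(\mathcal{M},\mathcal{A},\mathbb{P})$ described in the context, and let $\mathbb{P}^*$ be the associated outer measure. Then \[\mathbb{P}^*\big(\{(N_1,N_2)\in\mathcal{M}\mid N_1\cap N_2=0\}\big)=1.\] Furthermore, \[\sup\{\mathbb{P}(B)\mid B\in\mathcal{A},\ B\subset \{(N_1,N_2)\in\mathcal{M}\mid N_1\cap N_2=0\}\}=1.\]
   Context: A cyclic submodule $N\subset\Omega^2$ (resp. $N\subset\Omega_n^2$) is called maximal if it is not contained in $T\Omega^2$ (resp. $T\Omega_n^2$). Let $\mathcal{M}_n$ be the (finite) set of pairs $(\bar N_1,\bar N_2)$ of maximal submodules of $\Omega_n^2$, with $\mathcal{A}_n$ its power set and $\mathbb{P}_n$ the uniform probability measure on $\mathcal{M}_n$. Reduction modulo $T^n$ gives projections $\pi_n:\mathcal{M}\to\mathcal{M}_n$ and $\pi_{m,n}:\mathcal{M}_m\to\mathcal{M}_n$ ($m\ge n$), so that $\mathcal{M}=\varprojlim_n\mathcal{M}_n$ and $((\mathcal{M}_n,\mathcal{A}_n,\mathbb{P}_n),\pi_{m,n})$ is a projective system of probability spaces; $(\mathcal{M},\mathcal{A},\mathbb{P})$ denotes its inverse limit (so $\mathbb{P}(\pi_n^{-1}(A))=\mathbb{P}_n(A)$ for $A\in\mathcal{A}_n$).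 For any $X\subset\mathcal{M}$, $\mathbb{P}^*(X):=\inf_{X\subset B\in\mathcal{A}}\mathbb{P}(B)$. *)

theory Defs
  imports "HOL-Probability.Probability" "HOL-Computational_Algebra.Formal_Power_Series"
begin

text \<open>Omega = k[[T]] is the type 'k fps, with k a finite field of prime order p (i.e. F_p).  Omega_n = Omega/(T^n) is represented by the truncated series
  (fps_cutoff n), and Omega_n^2 by truncated pairs.\<close>

type_synonym 'k vec2 = "'k fps \<times> 'k fps"

definition cyclic_sub :: "'k::comm_ring_1 vec2 \<Rightarrow> 'k vec2 set" where
  "cyclic_sub v = {(c * fst v, c * snd v) | c. True}"

definition T_Omega2 :: "'k::comm_ring_1 vec2 set" where
  "T_Omega2 = {(fps_X * a, fps_X * b) | a b. True}"

definition maximal_sub :: "'k::comm_ring_1 vec2 set \<Rightarrow> bool" where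
  "maximal_sub N \<longleftrightarrow> (\<exists>v. N = cyclic_sub v) \<and> \<not> N \<subseteq> T_Omega2"

definition trunc2 :: "nat \<Rightarrow> 'k::comm_ring_1 vec2 \<Rightarrow> 'k vec2" where
  "trunc2 n v = (fps_cutoff n (fst v), fps_cutoff n (snd v))"

definition Omega2_n :: "nat \<Rightarrow> 'k::comm_ring_1 vec2 set" where
  "Omega2_n n = range (trunc2 n)"

definition cyclic_sub_n :: "nat \<Rightarrow> 'k::comm_ring_1 vec2 \<Rightarrow> 'k vec2 set" where
  "cyclic_sub_n n v = {trunc2 n (c * fst v, c * snd v) | c. True}"

definition T_Omega2_n :: "nat \<Rightarrow> 'k::comm_ring_1 vec2 set" where
  "T_Omega2_n n = {trunc2 n (fps_X * a, fps_X * b) | a b. True}"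

definition maximal_sub_n :: "nat \<Rightarrow> 'k::comm_ring_1 vec2 set \<Rightarrow> bool" where
  "maximal_sub_n n N \<longleftrightarrow> (\<exists>v\<in>Omega2_n n. N = cyclic_sub_n n v) \<and> \<not> N \<subseteq> T_Omega2_n n"

definition MM :: "('k::comm_ring_1 vec2 set \<times> 'k vec2 set) set" where
  "MM = {(N1, N2). maximal_sub N1 \<and> maximal_sub N2}"

definition MM_n :: "nat \<Rightarrow> ('k::comm_ring_1 vec2 set \<times> 'k vec2 set) set" where
  "MM_n n = {(N1, N2). maximal_sub_n n N1 \<and> maximal_sub_n n N2}"

definition proj_n :: "nat \<Rightarrow> ('k::comm_ring_1 vec2 set \<times> 'k vec2 set) \<Rightarrow> ('k vec2 set \<times> 'k vec2 set)" where
  "proj_n n x = (trunc2 n ` fst x, trunc2 n ` snd x)"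

definition P_n :: "nat \<Rightarrow> ('k::comm_ring_1 vec2 set \<times> 'k vec2 set) set \<Rightarrow> real" where
  "P_n n A = real (card A) / real (card (MM_n n :: ('k vec2 set \<times> 'k vec2 set) set))"

definition cylinders :: "('k::comm_ring_1 vec2 set \<times> 'k vec2 set) set set" where
  "cylinders = {MM \<inter> proj_n n -` A | n A. 1 \<le> n \<and> A \<subseteq> MM_n n}"

definition is_inverse_limit_measure :: "('k::comm_ring_1 vec2 set \<times> 'k vec2 set) measure \<Rightarrow> bool" where
  "is_inverse_limit_measure P \<longleftrightarrow>
     prob_space P \<and> space P = MM \<and> sets P = sigma_sets MM cylinders \<and>
     (\<forall>n A. 1 \<le> n \<longrightarrow> A \<subseteq> MM_n n \<longrightarrow> measure P (MM \<inter> proj_n n -` A) = P_n n A)"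

definition outer_P :: "('k::comm_ring_1 vec2 set \<times> 'k vec2 set) measure \<Rightarrow> ('k vec2 set \<times> 'k vec2 set) set \<Rightarrow> real" where
  "outer_P P X = Inf {measure P B | B. B \<in> sets P \<and> X \<subseteq> B}"

end

theory Submission
  imports Defs
begin

text \<open>Over a field k, \<Omega> = k[[T]] is a discrete valuation ring. A maximal submodule is generated
  by a vector with a unit coordinate, and two such submodules sharing a nonzero element c v = d w
  coincide: if d divides c then w is a unit multiple of v. So N1 \<inter> N2 \<noteq> 0 forces N1 = N2, and
  all such pairs lie in the cylinder over the diagonal of M_n. As \<Omega>_n^2 has at least n maximal
  submodules (generated by (1, T^k) for k < n), this cylinder has probability at most 1/n; its
  complement is a measurable subset of the good set of probability at least 1 - 1/n.\<close>

lemma fps_X_mult_shift_1: "fps_nth f 0 = 0 \<Longrightarrow> fps_X * fps_shift 1 f = (f :: 'k::comm_ring_1 fps)"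
  by (intro fps_ext) auto

definition unimodular :: "'k::comm_ring_1 vec2 \<Rightarrow> bool" where
  "unimodular v \<longleftrightarrow> fps_nth (fst v) 0 \<noteq> 0 \<or> fps_nth (snd v) 0 \<noteq> 0"

lemma T_Omega2_eq: "T_Omega2 = {v. \<not> unimodular v}"
proof (intro set_eqI iffI)
  fix v :: "'k::comm_ring_1 vec2"
  assume "v \<in> {v. \<not> unimodular v}"
  then have "fps_nth (fst v) 0 = 0" "fps_nth (snd v) 0 = 0"
    unfolding unimodular_def by auto
  then have "v = (fps_X * fps_shift 1 (fst v), fps_X * fps_shift 1 (snd v))"
    using fps_X_mult_shift_1 by (metis prod.collapse)
  then show "v \<in> T_Omega2"
    unfolding T_Omega2_def by blast
qed (auto simp: T_Omega2_def unimodular_def)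

lemma T_Omega2_n_not_unimodular: "x \<in> T_Omega2_n n \<Longrightarrow> \<not> unimodular x"
  unfolding T_Omega2_n_def trunc2_def unimodular_def by auto

lemma unimodular_trunc2_iff: "1 \<le> n \<Longrightarrow> unimodular (trunc2 n v) \<longleftrightarrow> unimodular v"
  unfolding unimodular_def trunc2_def by simp

lemma maximal_sub_unimodular_generator:
  assumes "maximal_sub N"
  obtains v where "unimodular v" "N = cyclic_sub v"
proof -
  obtain v where N: "N = cyclic_sub v" and "\<not> N \<subseteq> T_Omega2"
    using assms unfolding maximal_sub_def by blast
  then obtain c where "unimodular (c * fst v, c * snd v)"
    unfolding cyclic_sub_def T_Omega2_eq by auto
  then have "unimodular v"
    unfolding unimodular_def by auto
  with N show thesis
    using that by blast
qed

lemma maximal_sub_cyclic_sub: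
  assumes "unimodular v"
  shows "maximal_sub (cyclic_sub v)"
proof -
  have "v \<in> cyclic_sub v"
    unfolding cyclic_sub_def by (auto intro: exI[of _ 1])
  with assms show ?thesis
    unfolding maximal_sub_def T_Omega2_eq by blast
qed

lemma cyclic_sub_unit_mult:
  fixes e :: "'k::comm_ring_1 fps"
  assumes "e dvd 1"
  shows "cyclic_sub (e * fst v, e * snd v) = cyclic_sub v"
proof (intro set_eqI iffI)
  fix z
  assume "z \<in> cyclic_sub (e * fst v, e * snd v)"
  then obtain c where "z = ((c * e) * fst v, (c * e) * snd v)"
    unfolding cyclic_sub_def by (auto simp: mult.assoc)
  then show "z \<in> cyclic_sub v"
    unfolding cyclic_sub_def by blast
next
  fix z
  assume "z \<in> cyclic_sub v"
  then obtain c where z: "z = (c * fst v, c * snd v)"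
    unfolding cyclic_sub_def by auto
  obtain f where ef: "1 = e * f"
    using assms by (rule dvdE)
  have cancel: "(c * f) * (e * x) = c * x" for x :: "'k fps"
  proof -
    have "(c * f) * (e * x) = c * (e * f) * x"
      by (simp only: ac_simps)
    then show ?thesis
      by (simp flip: ef)
  qed
  have "z = ((c * f) * (e * fst v), (c * f) * (e * snd v))"
    unfolding z cancel ..
  then show "z \<in> cyclic_sub (e * fst v, e * snd v)"
    unfolding cyclic_sub_def by auto
qed

lemma cyclic_sub_eq_if_mult_eq:
  fixes c d :: "'k::field fps"
  assumes "unimodular w" "d \<noteq> 0" "d dvd c"
    and "c * fst v = d * fst w" "c * snd v = d * snd w"
  shows "cyclic_sub w = cyclic_sub v"
proof -
  obtain e where "c = d * e"
    using assms(3) by (rule dvdE)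
  with assms(2,4,5) have w: "w = (e * fst v, e * snd v)"
    by (simp add: mult.assoc prod_eq_iff)
  with assms(1) have "e dvd 1"
    unfolding unimodular_def by auto
  then show ?thesis
    unfolding w by (rule cyclic_sub_unit_mult)
qed

lemma cyclic_sub_eq_if_common_nonzero:
  fixes v w :: "'k::field vec2"
  assumes "unimodular v" "unimodular w"
    and "z \<in> cyclic_sub v" "z \<in> cyclic_sub w" "z \<noteq> 0"
  shows "cyclic_sub v = cyclic_sub w"
proof -
  obtain c d where z: "z = (c * fst v, c * snd v)" "z = (d * fst w, d * snd w)"
    using assms(3,4) unfolding cyclic_sub_def by blast
  then have eqs: "c * fst v = d * fst w" "c * snd v = d * snd w"
    by simp_all
  have "c \<noteq> 0" "d \<noteq> 0"
    using assms(5) z by (auto simp: zero_prod_def)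
  then have "d dvd c \<or> c dvd d"
    by (metis fps_dvd_iff nat_le_linear)
  then show ?thesis
  proof
    assume "d dvd c"
    then show ?thesis
      using cyclic_sub_eq_if_mult_eq[OF assms(2) \<open>d \<noteq> 0\<close> _ eqs] by simp
  next
    assume "c dvd d"
    then show ?thesis
      using cyclic_sub_eq_if_mult_eq[OF assms(1) \<open>c \<noteq> 0\<close> _ eqs[symmetric]] by simp
  qed
qed

lemma maximal_sub_inter_eq_0:
  fixes N1 N2 :: "'k::field vec2 set"
  assumes "maximal_sub N1" "maximal_sub N2" "N1 \<noteq> N2"
  shows "N1 \<inter> N2 = {0}"
proof -
  obtain v w where v: "unimodular v" "N1 = cyclic_sub v" and w: "unimodular w" "N2 = cyclic_sub w"
    using assms(1,2) by (metis maximal_sub_unimodular_generator)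
  have "0 \<in> N1 \<inter> N2"
    unfolding v w cyclic_sub_def by (force simp: zero_prod_def)
  moreover have "z = 0" if "z \<in> N1 \<inter> N2" for z
    using that assms(3) cyclic_sub_eq_if_common_nonzero[OF v(1) w(1)] unfolding v w by blast
  ultimately show ?thesis
    by blast
qed

lemma fps_cutoff_mult_cutoff:
  "fps_cutoff n (c * fps_cutoff n a) = fps_cutoff n (c * (a :: 'k::comm_ring_1 fps))"
  by (simp add: fps_cutoff_eq_fps_cutoff_iff fps_cutoff_right_mult_nth)

lemma trunc2_image_cyclic_sub: "trunc2 n ` cyclic_sub v = cyclic_sub_n n (trunc2 n v)"
  unfolding cyclic_sub_def cyclic_sub_n_def trunc2_def
  by (force simp: fps_cutoff_mult_cutoff)

lemma maximal_sub_n_trunc2_image: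
  assumes "maximal_sub N" "1 \<le> n"
  shows "maximal_sub_n n (trunc2 n ` N)"
proof -
  obtain v where v: "unimodular v" "N = cyclic_sub v"
    using assms(1) by (rule maximal_sub_unimodular_generator)
  have "trunc2 n v \<in> trunc2 n ` N"
    unfolding v(2) cyclic_sub_def by (rule imageI) (auto intro: exI[of _ 1])
  moreover have "trunc2 n v \<notin> T_Omega2_n n"
    using v(1) assms(2) T_Omega2_n_not_unimodular unimodular_trunc2_iff by blast
  ultimately show ?thesis
    unfolding maximal_sub_n_def Omega2_n_def v(2) trunc2_image_cyclic_sub by blast
qed

lemma fps_cutoff_X_power: "k < n \<Longrightarrow> fps_cutoff n (fps_X ^ k :: 'k::comm_ring_1 fps) = fps_X ^ k"
  by (auto intro: fps_ext)

lemma trunc2_1_X_power: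
  "k < n \<Longrightarrow> trunc2 n (1 :: 'k::comm_ring_1 fps, fps_X ^ k) = (1, fps_X ^ k)"
  unfolding trunc2_def by (simp add: fps_cutoff_one fps_cutoff_X_power)

lemma inj_on_cyclic_sub_n_X_power:
  "inj_on (\<lambda>k. cyclic_sub_n n (1 :: 'k::comm_ring_1 fps, fps_X ^ k)) {..<n}"
proof (rule inj_onI)
  fix j k
  assume "j \<in> {..<n}" "k \<in> {..<n}"
    and eq: "cyclic_sub_n n (1 :: 'k fps, fps_X ^ j) = cyclic_sub_n n (1, fps_X ^ k)"
  have "trunc2 n (1 :: 'k fps, fps_X ^ j) \<in> cyclic_sub_n n (1, fps_X ^ j)"
    unfolding cyclic_sub_n_def by (auto intro: exI[of _ 1])
  then have "trunc2 n (1 :: 'k fps, fps_X ^ j) \<in> cyclic_sub_n n (1, fps_X ^ k)"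
    unfolding eq .
  then obtain c :: "'k fps" where "trunc2 n (1, fps_X ^ j) = trunc2 n (c, c * fps_X ^ k)"
    unfolding cyclic_sub_n_def by auto
  then have "(1, fps_X ^ j) = trunc2 n (c, c * fps_X ^ k)"
    using \<open>j \<in> {..<n}\<close> by (simp add: trunc2_1_X_power)
  then have c: "fps_cutoff n c = 1" and j: "fps_X ^ j = fps_cutoff n (c * fps_X ^ k)"
    unfolding trunc2_def by simp_all
  have "fps_X ^ j = fps_cutoff n (fps_X ^ k * fps_cutoff n c)"
    using j by (metis fps_cutoff_mult_cutoff mult.commute)
  also have "\<dots> = fps_X ^ k"
    using \<open>k \<in> {..<n}\<close> unfolding c by (simp add: fps_cutoff_X_power)
  finally have "fps_X ^ j = (fps_X ^ k :: 'k fps)" .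
  then show "j = k"
    by (metis fps_X_power_nth one_neq_zero)
qed

lemma card_maximal_sub_n_ge:
  assumes "1 \<le> n" and fin: "finite {N :: 'k::comm_ring_1 vec2 set. maximal_sub_n n N}"
  shows "n \<le> card {N :: 'k vec2 set. maximal_sub_n n N}"
proof -
  have "maximal_sub_n n (cyclic_sub_n n (1 :: 'k fps, fps_X ^ k))" if "k < n" for k
  proof -
    have "unimodular (1 :: 'k fps, fps_X ^ k)"
      unfolding unimodular_def by simp
    then have "maximal_sub_n n (trunc2 n ` cyclic_sub (1 :: 'k fps, fps_X ^ k))"
      using assms(1) by (intro maximal_sub_n_trunc2_image maximal_sub_cyclic_sub)
    then show ?thesis
      unfolding trunc2_image_cyclic_sub trunc2_1_X_power[OF that] .
  qed
  then have "card {..<n} \<le> card {N :: 'k vec2 set. maximal_sub_n n N}"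
    by (intro card_inj_on_le[OF inj_on_cyclic_sub_n_X_power _ fin]) auto
  then show ?thesis
    by simp
qed

lemma measure_cylinder:
  assumes "is_inverse_limit_measure P" "1 \<le> n" "A \<subseteq> MM_n n"
  shows "measure P (MM \<inter> proj_n n -` A) = P_n n A"
  using assms unfolding is_inverse_limit_measure_def by blast

lemma measure_diagonal_cylinder_le:
  fixes P :: "('k::comm_ring_1 vec2 set \<times> 'k vec2 set) measure"
  assumes P: "is_inverse_limit_measure P" and n: "1 \<le> n"
  shows "measure P (MM \<inter> proj_n n -` {x \<in> MM_n n. fst x = snd x}) \<le> 1 / real n"
proof -
  define S where "S = {N :: 'k vec2 set. maximal_sub_n n N}"
  define D :: "('k vec2 set \<times> 'k vec2 set) set" where "D = {x \<in> MM_n n. fst x = snd x}"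
  have MM_n: "MM_n n = S \<times> S"
    unfolding MM_n_def S_def by auto
  have "D = (\<lambda>N. (N, N)) ` S"
    unfolding D_def MM_n by auto
  then have card_D: "card D = card S"
    by (simp add: card_image inj_on_def)
  have "D \<subseteq> MM_n n"
    unfolding D_def by auto
  then have "measure P (MM \<inter> proj_n n -` D) = P_n n D"
    by (rule measure_cylinder[OF P n])
  also have "\<dots> = real (card S) / (real (card S) * real (card S))"
    unfolding P_n_def card_D MM_n card_cartesian_product by simp
  also have "\<dots> \<le> 1 / real n"
  proof (cases "card S = 0")
    case False
    then have "finite S"
      by (meson card.infinite)
    then have "n \<le> card S"
      unfolding S_def by (rule card_maximal_sub_n_ge[OF n])
    moreover have "real (card S) / (real (card S) * real (card S)) = 1 / real (card S)"
      using False by simp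
    ultimately show ?thesis
      using n by (simp add: divide_left_mono)
    \<comment> \<open>The case card S = 0 includes infinite S, where P_n is the junk value 0.\<close>
  qed simp
  finally show ?thesis
    unfolding D_def .
qed

lemma large_measurable_subset_of_trivial_intersections:
  fixes P :: "('k::field vec2 set \<times> 'k vec2 set) measure"
  assumes P: "is_inverse_limit_measure P" and n: "1 \<le> n"
  shows "\<exists>B\<in>sets P. B \<subseteq> {(N1, N2) \<in> MM. N1 \<inter> N2 = {0}} \<and> 1 - 1 / real n \<le> measure P B"
proof -
  let ?C = "MM \<inter> proj_n n -` {x \<in> MM_n n. fst x = snd x}"
  have prob: "prob_space P" and space: "space P = MM" and sets: "sets P = sigma_sets MM cylinders"
    using P unfolding is_inverse_limit_measure_def by auto
  have "?C \<in> sets P"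
    unfolding sets cylinders_def using n by (intro sigma_sets.Basic) blast
  then have "space P - ?C \<in> sets P" "measure P (space P - ?C) = 1 - measure P ?C"
    using prob_space.prob_compl[OF prob] by auto
  moreover have "space P - ?C \<subseteq> {(N1, N2) \<in> MM. N1 \<inter> N2 = {0}}"
  proof clarify
    fix N1 N2
    assume "(N1, N2) \<in> space P" "(N1, N2) \<notin> ?C"
    then have max: "maximal_sub N1" "maximal_sub N2"
      and "proj_n n (N1, N2) \<notin> {x \<in> MM_n n. fst x = snd x}"
      unfolding space MM_def by auto
    moreover have "proj_n n (N1, N2) \<in> MM_n n"
      using max n unfolding proj_n_def MM_n_def by (simp add: maximal_sub_n_trunc2_image)
    ultimately have "N1 \<noteq> N2"
      unfolding proj_n_def by auto
    with max show "(N1, N2) \<in> MM \<and> N1 \<inter> N2 = {0}"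
      unfolding MM_def by (simp add: maximal_sub_inter_eq_0)
  qed
  ultimately show ?thesis
    using measure_diagonal_cylinder_le[OF P n] by (intro bexI[of _ "space P - ?C"]) auto
qed

context prob_space
begin

lemma Inf_measure_supersets_eq_1:
  assumes "X \<subseteq> space M"
    and approx: "\<And>e. 0 < e \<Longrightarrow> \<exists>B\<in>sets M. B \<subseteq> X \<and> 1 - e \<le> measure M B"
  shows "Inf {measure M B | B. B \<in> sets M \<and> X \<subseteq> B} = 1"
proof (rule cInf_eq_minimum)
  show "1 \<in> {measure M B | B. B \<in> sets M \<and> X \<subseteq> B}"
  proof -
    have "1 = measure M (space M)"
      by (rule prob_space[symmetric])
    then show ?thesis
      using assms(1) by blast
  qed
next
  fix y
  assume "y \<in> {measure M B | B. B \<in> sets M \<and> X \<subseteq> B}"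
  then obtain B where B: "y = measure M B" "B \<in> sets M" "X \<subseteq> B"
    by blast
  show "1 \<le> y"
  proof (rule field_le_epsilon)
    fix e :: real
    assume "0 < e"
    then obtain B' where B': "B' \<in> sets M" "B' \<subseteq> X" "1 - e \<le> measure M B'"
      using approx by blast
    have "measure M B' \<le> measure M B"
      using B'(2) B(2,3) by (intro finite_measure_mono) auto
    then show "1 \<le> y + e"
      using B(1) B'(3) by linarith
  qed
qed

lemma Sup_measure_subsets_eq_1:
  assumes approx: "\<And>e. 0 < e \<Longrightarrow> \<exists>B\<in>sets M. B \<subseteq> X \<and> 1 - e \<le> measure M B"
  shows "Sup {measure M B | B. B \<in> sets M \<and> B \<subseteq> X} = 1"
proof (rule cSup_eq_non_empty)
  show "{measure M B | B. B \<in> sets M \<and> B \<subseteq> X} \<noteq> {}"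
    by blast
next
  fix y
  assume "y \<in> {measure M B | B. B \<in> sets M \<and> B \<subseteq> X}"
  then show "y \<le> 1"
    using prob_le_1 by blast
next
  fix y
  assume upper: "\<And>x. x \<in> {measure M B | B. B \<in> sets M \<and> B \<subseteq> X} \<Longrightarrow> x \<le> y"
  show "1 \<le> y"
  proof (rule field_le_epsilon)
    fix e :: real
    assume "0 < e"
    then obtain B where "B \<in> sets M" "B \<subseteq> X" "1 - e \<le> measure M B"
      using approx by blast
    moreover from this(1,2) have "measure M B \<le> y"
      by (intro upper) blast
    ultimately show "1 \<le> y + e"
      by linarith
  qed
qed

end

theorem theorem4p8:
  fixes P :: "('k::{field,finite} vec2 set \<times> 'k vec2 set) measure"
  assumes "prime CARD('k)"
    and "is_inverse_limit_measure P"
  shows "outer_P P {(N1, N2) \<in> MM. N1 \<inter> N2 = {0}} = 1 \<and>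
         Sup {measure P B | B. B \<in> sets P \<and> B \<subseteq> {(N1, N2) \<in> MM. N1 \<inter> N2 = {0}}} = 1"
proof -
  let ?X = "{(N1, N2) \<in> (MM :: ('k vec2 set \<times> 'k vec2 set) set). N1 \<inter> N2 = {0}}"
  have prob: "prob_space P" and space: "space P = MM"
    using assms(2) unfolding is_inverse_limit_measure_def by auto
  have approx: "\<exists>B\<in>sets P. B \<subseteq> ?X \<and> 1 - e \<le> measure P B" if e: "0 < e" for e :: real
  proof -
    obtain n :: nat where n: "0 < n" "inverse (real n) < e"
      using ex_inverse_of_nat_less[OF e] by blast
    then obtain B where "B \<in> sets P" "B \<subseteq> ?X" "1 - 1 / real n \<le> measure P B"
      using large_measurable_subset_of_trivial_intersections[OF assms(2), of n] by auto
    moreover have "1 - e \<le> 1 - 1 / real n"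
      using n(2) by (simp add: inverse_eq_divide)
    ultimately show ?thesis
      by (intro bexI[of _ B] conjI) auto
  qed
  have "?X \<subseteq> space P"
    unfolding space by blast
  then show ?thesis
    unfolding outer_P_def
    by (intro conjI prob_space.Inf_measure_supersets_eq_1[OF prob _ approx]
        prob_space.Sup_measure_subsets_eq_1[OF prob approx])
qed

end
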